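(* There exist a constant $c>0$ and a sequence $(\Phi_n(x))_{n\ge0}$ of existential Presburger formulas with one free variable, of size $O(n^2)$, such that for all sufficiently large $n$, every quantifier-free Presburger formula $\varphi_n$ equivalent to $\Phi_n$ satisfies $|\varphi_n|\ge 2^{cn}$ (sizes measured with constants in binary).
   Context: Presburger arithmetic is the first-order theory of $\langle\mathbb{Z};+,<,(\equiv_m)_m,0,1\rangle$ with atoms $\sum a_ix_i\le b$ and $\sum a_ix_i\equiv b\pmod m$. Quantifier-free formulas are Boolean combinations of atoms; existential formulas are $\exists\bm{u}\colon\chi$ with $\chi$ quantifier-free. The size $|\varphi|$ is the number of symbols to write $\varphi$ with constants in binary. Two formulas are equivalent if they define the same subset of $\mathbb{Z}$. *)

theory Defs
  imports Main "HOL-Library.Landau_Symbols"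
begin

text \<open>Syntax of Presburger arithmetic. Variables are natural-number indices;
  variable 0 plays the role of the free variable x. A linear form
  sum a_i x_i is a list of (coefficient, variable) pairs.\<close>

type_synonym lin = "(int \<times> nat) list"

datatype pform =
    Le lin int
  | Cong lin int int
  | Neg pform
  | Conj pform pform
  | Disj pform pform
  | Ex nat pform

definition lval :: "lin \<Rightarrow> (nat \<Rightarrow> int) \<Rightarrow> int" where
  "lval t \<sigma> = (\<Sum>p\<leftarrow>t. fst p * \<sigma> (snd p))"

fun sat :: "pform \<Rightarrow> (nat \<Rightarrow> int) \<Rightarrow> bool" where
  "sat (Le t b) \<sigma> = (lval t \<sigma> \<le> b)"
| "sat (Cong t b m) \<sigma> = (lval t \<sigma> mod m = b mod m)"
| "sat (Neg \<phi>) \<sigma> = (\<not> sat \<phi> \<sigma>)"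
| "sat (Conj \<phi> \<psi>) \<sigma> = (sat \<phi> \<sigma> \<and> sat \<psi> \<sigma>)"
| "sat (Disj \<phi> \<psi>) \<sigma> = (sat \<phi> \<sigma> \<or> sat \<psi> \<sigma>)"
| "sat (Ex v \<phi>) \<sigma> = (\<exists>z. sat \<phi> (\<sigma>(v := z)))"

fun fv :: "pform \<Rightarrow> nat set" where
  "fv (Le t b) = snd ` set t"
| "fv (Cong t b m) = snd ` set t"
| "fv (Neg \<phi>) = fv \<phi>"
| "fv (Conj \<phi> \<psi>) = fv \<phi> \<union> fv \<psi>"
| "fv (Disj \<phi> \<psi>) = fv \<phi> \<union> fv \<psi>"
| "fv (Ex v \<phi>) = fv \<phi> - {v}"

fun wf :: "pform \<Rightarrow> bool" where
  "wf (Le t b) = True"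
| "wf (Cong t b m) = (m > 0)"
| "wf (Neg \<phi>) = wf \<phi>"
| "wf (Conj \<phi> \<psi>) = (wf \<phi> \<and> wf \<psi>)"
| "wf (Disj \<phi> \<psi>) = (wf \<phi> \<and> wf \<psi>)"
| "wf (Ex v \<phi>) = wf \<phi>"

fun qfree :: "pform \<Rightarrow> bool" where
  "qfree (Le t b) = True"
| "qfree (Cong t b m) = True"
| "qfree (Neg \<phi>) = qfree \<phi>"
| "qfree (Conj \<phi> \<psi>) = (qfree \<phi> \<and> qfree \<psi>)"
| "qfree (Disj \<phi> \<psi>) = (qfree \<phi> \<and> qfree \<psi>)"
| "qfree (Ex v \<phi>) = False"

fun existential :: "pform \<Rightarrow> bool" where
  "existential (Ex v \<phi>) = existential \<phi>"
| "existential \<phi> = qfree \<phi>"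

fun binlen :: "nat \<Rightarrow> nat" where
  "binlen n = (if n \<le> 1 then 1 else 1 + binlen (n div 2))"

text \<open>Size of an integer constant written in binary, with a sign symbol.\<close>
definition isize :: "int \<Rightarrow> nat" where
  "isize a = 1 + binlen (nat \<bar>a\<bar>)"

definition lsize :: "lin \<Rightarrow> nat" where
  "lsize t = (\<Sum>p\<leftarrow>t. isize (fst p) + 2)"   \<comment> \<open>coefficient, variable, + symbol\<close>

fun psize :: "pform \<Rightarrow> nat" where
  "psize (Le t b) = lsize t + isize b + 1"
| "psize (Cong t b m) = lsize t + isize b + isize m + 1"
| "psize (Neg \<phi>) = 1 + psize \<phi>"
| "psize (Conj \<phi> \<psi>) = 1 + psize \<phi> + psize \<psi>"
| "psize (Disj \<phi> \<psi>) = 1 + psize \<phi> + psize \<psi>"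
| "psize (Ex v \<phi>) = 2 + psize \<phi>"

definition defset :: "pform \<Rightarrow> int set" where
  "defset \<phi> = {z. sat \<phi> ((\<lambda>_. 0)(0 := z))}"

end

theory Submission
  imports Defs "HOL-Computational_Algebra.Primes"
begin

text \<open>
  The existential formula \<open>Phi n\<close> below has size linear in \<open>n\<close> and defines the set of
  integers whose \<open>n\<close>-th binary digit is \<open>0\<close>. Evaluated at points \<open>x\<close> larger than all
  constants of its linear inequalities, a quantifier-free formula in \<open>x\<close> is a Boolean
  function of its congruence atoms. Let \<open>Q\<close> be the odd part of the product of the moduli
  and \<open>D = 2\<^sup>n Q\<close>. For each \<open>p < 2\<^sup>n\<close> the large points \<open>X\<^sub>p \<equiv> p\<close> and
  \<open>X\<^sub>p + D \<equiv> p + 2\<^sup>n (mod 2\<^sup>n\<^sup>+\<^sup>1)\<close> differ in their \<open>n\<close>-th digit, so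
  some congruence atom separates them; a 2-adic divisibility argument shows that an atom
  separating \<open>X\<^sub>p\<close> from \<open>X\<^sub>p + D\<close> and \<open>X\<^sub>q\<close> from \<open>X\<^sub>q + D\<close> forces \<open>p \<equiv> q (mod 2\<^sup>n)\<close>.
  Hence there are at least \<open>2\<^sup>n\<close> congruence atoms.
\<close>

abbreviation point :: "int \<Rightarrow> nat \<Rightarrow> int" where
  "point z \<equiv> (\<lambda>_. 0)(0 := z)"

definition bit_clear :: "nat \<Rightarrow> int set" where
  "bit_clear n = {z. z mod 2 ^ Suc n < 2 ^ n}"

definition Phi :: "nat \<Rightarrow> pform" where
  "Phi n = Ex 1 (Ex 2 (Conj (Conj (Le [(1,0), (-(2^(n+1)),1), (-1,2)] 0)
                                  (Le [(-1,0), (2^(n+1),1), (1,2)] 0))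
                            (Conj (Le [(-1,2)] 0) (Le [(1,2)] (2^n - 1)))))"

lemma Phi_shape: "existential (Phi n) \<and> wf (Phi n) \<and> fv (Phi n) \<subseteq> {0}"
  by (auto simp: Phi_def)

lemma sat_Phi:
  "sat (Phi n) \<sigma> \<longleftrightarrow> (\<exists>a b::int. \<sigma> 0 = 2^(n+1) * a + b \<and> 0 \<le> b \<and> b < 2^n)"
proof -
  have "sat (Phi n) \<sigma> \<longleftrightarrow> (\<exists>a b::int. \<sigma> 0 - 2^(n+1) * a - b \<le> 0 \<and>
          - \<sigma> 0 + 2^(n+1) * a + b \<le> 0 \<and> - b \<le> 0 \<and> b \<le> 2^n - 1)"
    unfolding Phi_def
    by (simp only: sat.simps lval_def fun_upd_same fun_upd_other list.map fst_conv snd_conv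
        sum_list.Cons sum_list.Nil) (simp add: algebra_simps)
  also have "\<dots> \<longleftrightarrow> (\<exists>a b::int. \<sigma> 0 = 2^(n+1) * a + b \<and> 0 \<le> b \<and> b < 2^n)"
    by (intro iff_exI) linarith
  finally show ?thesis .
qed

lemma defset_Phi: "defset (Phi n) = bit_clear n"
proof -
  have "(\<exists>a b::int. z = 2^(n+1) * a + b \<and> 0 \<le> b \<and> b < 2^n) \<longleftrightarrow> z mod 2^(n+1) < 2^n"
    for z :: int
  proof
    assume "\<exists>a b::int. z = 2^(n+1) * a + b \<and> 0 \<le> b \<and> b < 2^n"
    then obtain a b :: int where z: "z = 2^(n+1) * a + b" and b: "0 \<le> b" "b < 2^n"
      by blast
    have "b < 2^(n+1)" using b(2) power_increasing[of n "n+1" "2::int"] by linarith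
    then have "z mod 2^(n+1) = b" using b(1) unfolding z by simp
    with b(2) show "z mod 2^(n+1) < 2^n" by simp
  next
    assume "z mod 2^(n+1) < 2^n"
    then show "\<exists>a b::int. z = 2^(n+1) * a + b \<and> 0 \<le> b \<and> b < 2^n"
      by (intro exI[of _ "z div 2^(n+1)"] exI[of _ "z mod 2^(n+1)"]) simp
  qed
  then show ?thesis by (simp add: defset_def bit_clear_def sat_Phi)
qed

declare binlen.simps [simp del]

lemma binlen_le: "x < 2 ^ j \<Longrightarrow> binlen x \<le> j + 1"
proof (induction j arbitrary: x)
  case 0
  then show ?case by (simp add: binlen.simps)
next
  case (Suc j)
  then have "x div 2 < 2 ^ j" by auto
  from Suc.IH[OF this] show ?case by (simp add: binlen.simps)
qed

lemma isize_le: "\<bar>a\<bar> < 2 ^ j \<Longrightarrow> isize a \<le> j + 2"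
  using binlen_le[of "nat \<bar>a\<bar>" j] by (simp add: isize_def nat_less_iff)

lemma psize_Phi: "psize (Phi n) \<le> 60 + 4 * n"
proof -
  have "isize (2^(n+1)) \<le> n + 4" "isize (-(2^(n+1))) \<le> n + 4"
    using isize_le[of "2^(n+1)" "n+2"] isize_le[of "-(2^(n+1))" "n+2"] by simp_all
  moreover have "isize (2^n - 1) \<le> n + 2"
    using isize_le[of "2^n - 1" n] by simp
  moreover have "isize 1 = 2" "isize (-1) = 2" "isize 0 = 2"
    by (simp_all add: isize_def binlen.simps)
  ultimately show ?thesis by (simp add: Phi_def lsize_def)
qed

lemma psize_Phi_bigo: "(\<lambda>n. real (psize (Phi n))) \<in> O(\<lambda>n. real n ^ 2)"
proof (rule bigoI[where c = 64])
  have "real (psize (Phi n)) \<le> 64 * real n ^ 2" if "n \<ge> 1" for n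
  proof -
    have "psize (Phi n) \<le> 64 * n ^ 2"
      using psize_Phi[of n] le_square[of n] that unfolding power2_eq_square by linarith
    then have "real (psize (Phi n)) \<le> real (64 * n ^ 2)"
      by (simp only: of_nat_le_iff)
    then show ?thesis by simp
  qed
  then show "eventually (\<lambda>n. norm (real (psize (Phi n))) \<le> 64 * norm (real n ^ 2)) at_top"
    unfolding eventually_at_top_linorder by (intro exI[of _ 1]) simp
qed

fun congs :: "pform \<Rightarrow> (lin \<times> int \<times> int) list" where
  "congs (Le t b) = []"
| "congs (Cong t b m) = [(t, b, m)]"
| "congs (Neg \<phi>) = congs \<phi>"
| "congs (Conj \<phi> \<psi>) = congs \<phi> @ congs \<psi>"
| "congs (Disj \<phi> \<psi>) = congs \<phi> @ congs \<psi>"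
| "congs (Ex v \<phi>) = congs \<phi>"

fun le_bounds :: "pform \<Rightarrow> int list" where
  "le_bounds (Le t b) = [b]"
| "le_bounds (Cong t b m) = []"
| "le_bounds (Neg \<phi>) = le_bounds \<phi>"
| "le_bounds (Conj \<phi> \<psi>) = le_bounds \<phi> @ le_bounds \<psi>"
| "le_bounds (Disj \<phi> \<psi>) = le_bounds \<phi> @ le_bounds \<psi>"
| "le_bounds (Ex v \<phi>) = le_bounds \<phi>"

lemma length_congs_le_psize: "length (congs \<phi>) \<le> psize \<phi>"
  by (induction \<phi>) auto

lemma congs_modulus_pos: "wf \<phi> \<Longrightarrow> (t, b, m) \<in> set (congs \<phi>) \<Longrightarrow> m > 0"
  by (induction \<phi>) auto

definition csum :: "lin \<Rightarrow> int" where
  "csum t = (\<Sum>p\<leftarrow>t. fst p)"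

lemma lval_single_var: "snd ` set t \<subseteq> {0} \<Longrightarrow> lval t \<sigma> = csum t * \<sigma> 0"
  by (induction t) (auto simp: lval_def csum_def algebra_simps)

definition cong_holds :: "lin \<times> int \<times> int \<Rightarrow> int \<Rightarrow> bool" where
  "cong_holds = (\<lambda>(t, b, m) x. csum t * x mod m = b mod m)"

lemma large_mult_le_iff:
  fixes a b x :: int
  assumes "\<bar>b\<bar> < x"
  shows "a * x \<le> b \<longleftrightarrow> a < 0 \<or> a = 0 \<and> 0 \<le> b"
proof -
  consider "a < 0" | "a = 0" | "a > 0" by linarith
  then show ?thesis
  proof cases
    case 1
    then have "a * x \<le> - x" using assms mult_right_mono[of a "-1" x] by simp
    then show ?thesis using 1 assms by linarith
  next
    case 3
    then have "x \<le> a * x" using assms mult_right_mono[of 1 a x] by simp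
    then show ?thesis using 3 assms by linarith
  qed simp
qed

lemma sat_point_eq_if_congs_agree:
  assumes "qfree \<phi>" "fv \<phi> \<subseteq> {0}"
    and "\<forall>b\<in>set (le_bounds \<phi>). \<bar>b\<bar> < x \<and> \<bar>b\<bar> < y"
    and "\<forall>j\<in>set (congs \<phi>). cong_holds j x = cong_holds j y"
  shows "sat \<phi> (point x) = sat \<phi> (point y)"
  using assms
proof (induction \<phi>)
  case (Le t b)
  then show ?case by (simp add: lval_single_var large_mult_le_iff)
next
  case (Cong t b m)
  then show ?case by (simp add: lval_single_var cong_holds_def)
qed simp_all

lemma dvd_of_dvd_mult_odd:
  fixes m c y :: int
  assumes "m dvd c * y" "m dvd c * 2 ^ t" "odd y"
  shows "m dvd c"
proof -
  have "m dvd gcd (c * y) (c * 2 ^ t)" using assms(1,2) by simp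
  also have "gcd (c * y) (c * 2 ^ t) = \<bar>c\<bar>"
    using assms(3) by (simp add: gcd_mult_left)
  finally show ?thesis by simp
qed

lemma pow2_dvd_if_not_dvd:
  fixes m c y :: int
  assumes "m dvd c * y" "m dvd c * 2 ^ t" "\<not> m dvd c * 2 ^ n"
  shows "2 ^ Suc n dvd y"
  using assms
proof (induction n arbitrary: c y)
  case (0 c y)
  have "even y"
  proof (rule ccontr)
    assume "odd y"
    with 0(1,2) have "m dvd c" by (rule dvd_of_dvd_mult_odd)
    with 0 show False by simp
  qed
  then show ?case by simp
next
  case (Suc n c y)
  have "even y"
  proof (rule ccontr)
    assume "odd y"
    with Suc.prems(1,2) have "m dvd c" by (rule dvd_of_dvd_mult_odd)
    with Suc.prems(3) show False by (simp add: dvd_mult2)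
  qed
  then obtain y' where y: "y = 2 * y'" ..
  have "m dvd (2 * c) * y'" using Suc.prems(1) by (simp add: y ac_simps)
  moreover have "m dvd (2 * c) * 2 ^ t"
    using dvd_mult[OF Suc.prems(2), of 2] by (simp add: ac_simps)
  moreover have "\<not> m dvd (2 * c) * 2 ^ n" using Suc.prems(3) by (simp add: ac_simps)
  ultimately have "2 ^ Suc n dvd y'" by (rule Suc.IH)
  then have "2 * 2 ^ Suc n dvd 2 * y'" by (rule mult_dvd_mono[OF dvd_refl])
  then show ?case by (simp only: y power_Suc)
qed

lemma cong_holds_separates_mod:
  fixes x y Q :: int
  assumes m: "m dvd 2 ^ t * Q"
    and x: "cong_holds (t', b, m) x \<noteq> cong_holds (t', b, m) (x + 2 ^ n * Q)"
    and y: "cong_holds (t', b, m) y \<noteq> cong_holds (t', b, m) (y + 2 ^ n * Q)"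
  shows "2 ^ n dvd x - y"
proof -
  define a where "a = csum t'"
  define D where "D = 2 ^ n * Q"
  have holds: "cong_holds (t', b, m) z \<longleftrightarrow> a * z mod m = b mod m" for z
    by (simp add: cong_holds_def a_def)
  have not_dvd: "\<not> m dvd a * Q * 2 ^ n"
  proof
    assume "m dvd a * Q * 2 ^ n"
    then have "a * (x + D) mod m = a * x mod m"
      by (simp add: D_def distrib_left mod_eq_dvd_iff ac_simps)
    with x show False by (simp add: holds D_def)
  qed
  \<comment> \<open>the atom holds at exactly one of \<open>x\<close> and \<open>x + D\<close>, so \<open>e, f \<in> {0, 1}\<close>\<close>
  obtain e f :: int where "a * (x + e * D) mod m = b mod m" "a * (y + f * D) mod m = b mod m"
    using x y by (metis holds D_def mult_1 mult_zero_left add_0_right)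
  then have "m dvd a * ((x + e * D) - (y + f * D))"
    by (metis mod_eq_dvd_iff right_diff_distrib)
  then have "m dvd a * Q * ((x + e * D) - (y + f * D))"
    by (simp add: ac_simps dvd_mult)
  moreover have "m dvd a * Q * 2 ^ t"
    using dvd_mult[OF m, of a] by (simp add: ac_simps)
  ultimately have "2 ^ Suc n dvd (x + e * D) - (y + f * D)"
    using not_dvd by (rule pow2_dvd_if_not_dvd)
  then have "2 ^ n dvd (x + e * D) - (y + f * D)"
    by (rule dvd_trans[rotated]) simp
  moreover have "(x + e * D) - (y + f * D) = (x - y) + 2 ^ n * ((e - f) * Q)"
    by (simp add: D_def algebra_simps)
  ultimately show ?thesis by (simp add: dvd_add_left_iff)
qed

lemma bit_clear_offsets:
  fixes K Q :: int
  assumes "p < 2 ^ n" "odd Q"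
  shows "int p + 2 ^ Suc n * K \<in> bit_clear n"
    and "int p + 2 ^ Suc n * K + 2 ^ n * Q \<notin> bit_clear n"
proof -
  have p: "int p < 2 ^ n"
    using assms(1) by (simp only: of_nat_less_numeral_power_cancel_iff)
  then have "int p < 2 ^ Suc n" "int p + 2 ^ n < 2 ^ Suc n"
    unfolding power_Suc by linarith+
  have "(int p + 2 ^ Suc n * K) mod 2 ^ Suc n = int p"
    unfolding mod_mult_self2 using \<open>int p < 2 ^ Suc n\<close> by (intro mod_pos_pos_trivial) simp_all
  then show "int p + 2 ^ Suc n * K \<in> bit_clear n"
    using p by (simp only: bit_clear_def mem_Collect_eq)
  obtain c where "Q = 2 * c + 1" using assms(2) by (blast elim: oddE)
  then have "int p + 2 ^ Suc n * K + 2 ^ n * Q = (int p + 2 ^ n) + 2 ^ Suc n * (K + c)"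
    by (simp add: algebra_simps)
  moreover have "(int p + 2 ^ n + 2 ^ Suc n * (K + c)) mod 2 ^ Suc n = int p + 2 ^ n"
    unfolding mod_mult_self2 using \<open>int p + 2 ^ n < 2 ^ Suc n\<close>
    by (intro mod_pos_pos_trivial) simp_all
  ultimately show "int p + 2 ^ Suc n * K + 2 ^ n * Q \<notin> bit_clear n"
    by (simp only: bit_clear_def mem_Collect_eq)
qed

lemma length_ge_if_separates_residues:
  fixes cs :: "(lin \<times> int \<times> int) list" and K Q :: int
  assumes moduli: "\<forall>j\<in>set cs. snd (snd j) dvd 2 ^ k * Q"
    and sep: "\<forall>p<2 ^ n. \<exists>j\<in>set cs.
      cong_holds j (int p + K) \<noteq> cong_holds j (int p + K + 2 ^ n * Q)"
  shows "2 ^ n \<le> length cs"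
proof -
  obtain F where F: "\<And>p. p < 2 ^ n \<Longrightarrow> F p \<in> set cs \<and>
      cong_holds (F p) (int p + K) \<noteq> cong_holds (F p) (int p + K + 2 ^ n * Q)"
    using sep by metis
  have "inj_on F {..<2 ^ n}"
  proof (rule inj_onI)
    fix p q assume "p \<in> {..<2 ^ n}" "q \<in> {..<2 ^ n}" and "F p = F q"
    then have p: "p < 2 ^ n" and q: "q < 2 ^ n" by simp_all
    obtain t' b m where j: "F p = (t', b, m)" by (cases "F p")
    have "m dvd 2 ^ k * Q"
      using moduli F[OF p] by (auto simp: j)
    moreover have "cong_holds (t', b, m) (int p + K) \<noteq> cong_holds (t', b, m) (int p + K + 2 ^ n * Q)"
      using F[OF p] by (simp add: j)
    moreover have "cong_holds (t', b, m) (int q + K) \<noteq> cong_holds (t', b, m) (int q + K + 2 ^ n * Q)"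
      using F[OF q] \<open>F p = F q\<close> by (simp add: j)
    ultimately have "2 ^ n dvd (int p + K) - (int q + K)"
      by (rule cong_holds_separates_mod)
    then have dvd: "2 ^ n dvd int p - int q" by simp
    have "int p < 2 ^ n" "int q < 2 ^ n"
      using p q by (simp_all only: of_nat_less_numeral_power_cancel_iff)
    then have bound: "\<bar>int p - int q\<bar> < 2 ^ n" by linarith
    have "int p - int q = 0"
    proof (rule ccontr)
      assume "int p - int q \<noteq> 0"
      then have "\<bar>2 ^ n\<bar> \<le> \<bar>int p - int q\<bar>" using dvd by (rule dvd_imp_le_int)
      with bound show False by simp
    qed
    then show "p = q" by simp
  qed
  then have "card {..<(2::nat) ^ n} \<le> card (set cs)"
    using F by (intro card_inj_on_le) auto
  also have "\<dots> \<le> length cs" by (rule card_length)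
  finally show ?thesis by simp
qed

lemma length_congs_if_defset_bit_clear:
  assumes qf: "qfree \<phi>" and wf: "wf \<phi>" and fv: "fv \<phi> \<subseteq> {0}"
    and ds: "defset \<phi> = bit_clear n"
  shows "2 ^ n \<le> length (congs \<phi>)"
proof -
  define P where "P = (\<Prod>j\<in>set (congs \<phi>). snd (snd j))"
  have "P > 0"
    unfolding P_def by (rule prod_pos) (use congs_modulus_pos[OF wf] in auto)
  define k where "k = multiplicity 2 P"
  obtain Q where P: "P = 2 ^ k * Q" and "odd Q"
    using \<open>P > 0\<close> multiplicity_decompose' unfolding k_def
    by (metis less_irrefl odd_one)
  have "Q > 0" using \<open>P > 0\<close> unfolding P by (simp add: zero_less_mult_iff)
  have moduli: "\<forall>j\<in>set (congs \<phi>). snd (snd j) dvd 2 ^ k * Q"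
    unfolding P[symmetric] P_def by (auto intro: dvd_prodI)
  define B where "B = sum_list (map abs (le_bounds \<phi>))"
  define K where "K = 2 ^ Suc n * (B + 1)"
  have "\<bar>b\<bar> < int p + K \<and> \<bar>b\<bar> < int p + K + 2 ^ n * Q" if "b \<in> set (le_bounds \<phi>)" for b p
  proof -
    have "\<bar>b\<bar> \<le> B"
      using that unfolding B_def by (intro member_le_sum_list) auto
    moreover have "B + 1 \<le> K"
      using mult_right_mono[of 1 "2 ^ Suc n" "B + 1"] one_le_power[of "2::int" "Suc n"]
        \<open>\<bar>b\<bar> \<le> B\<close> by (simp add: K_def)
    moreover have "0 \<le> 2 ^ n * Q" using \<open>Q > 0\<close> by simp
    ultimately show ?thesis by linarith
  qed
  then have large: "\<forall>b\<in>set (le_bounds \<phi>). \<bar>b\<bar> < int p + K \<and> \<bar>b\<bar> < int p + K + 2 ^ n * Q"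
    for p by blast
  have separating: "\<exists>j\<in>set (congs \<phi>).
      cong_holds j (int p + K) \<noteq> cong_holds j (int p + K + 2 ^ n * Q)" if "p < 2 ^ n" for p
  proof -
    have "int p + K \<in> defset \<phi>" "int p + K + 2 ^ n * Q \<notin> defset \<phi>"
      using bit_clear_offsets[OF that \<open>odd Q\<close>] unfolding ds K_def by auto
    then have "sat \<phi> (point (int p + K)) \<noteq> sat \<phi> (point (int p + K + 2 ^ n * Q))"
      by (simp add: defset_def)
    then show ?thesis
      using sat_point_eq_if_congs_agree[OF qf fv large] by blast
  qed
  show ?thesis
    by (rule length_ge_if_separates_residues[where K = K]) (use moduli separating in auto)
qed

theorem mainTheorem15:
  shows "\<exists>(c::real) (\<Phi>::nat \<Rightarrow> pform).
     c > 0 \<and>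
     (\<forall>n. existential (\<Phi> n) \<and> wf (\<Phi> n) \<and> fv (\<Phi> n) \<subseteq> {0}) \<and>
     (\<lambda>n. real (psize (\<Phi> n))) \<in> O(\<lambda>n. real n ^ 2) \<and>
     (\<exists>N. \<forall>n\<ge>N. \<forall>\<phi>. qfree \<phi> \<and> wf \<phi> \<and> fv \<phi> \<subseteq> {0} \<and> defset \<phi> = defset (\<Phi> n)
              \<longrightarrow> real (psize \<phi>) \<ge> 2 powr (c * real n))"
proof (intro exI[of _ 1] exI[of _ Phi] conjI allI impI Phi_shape psize_Phi_bigo exI[of _ 0])
  fix n \<phi> assume "qfree \<phi> \<and> wf \<phi> \<and> fv \<phi> \<subseteq> {0} \<and> defset \<phi> = defset (Phi n)"
  then have "2 ^ n \<le> length (congs \<phi>)"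
    by (intro length_congs_if_defset_bit_clear) (auto simp: defset_Phi)
  also have "\<dots> \<le> psize \<phi>" by (rule length_congs_le_psize)
  finally show "2 powr (1 * real n) \<le> real (psize \<phi>)"
    by (simp add: powr_realpow)
qed (use Phi_shape in auto)

end
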